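(* Let $0<R<\infty$ and let $f(x)=\sum_{n=0}^\infty a_nx^n$ with $a_n>0$ for all $n$ be convergent on $(-R,R)$. Define $m(x)=f(R-x^2/R)/f(x^2/R)$ for $x\in(0,R)$. If the sequence $\{R(n+1)a_{n+1}/a_n-n\}_{n\ge0}$ is decreasing, then $$\frac{1}{m\big(\sqrt[4]{(R^2-x^2)(R^2-y^2)}\big)}\le\sqrt{m(x)m(y)}\le m(\sqrt{xy})$$ for all $x,y\in(0,R)$, with equality if and only if $x=y$. *)

theory Defs
  imports Complex_Main
begin

definition pseries :: "(nat \<Rightarrow> real) \<Rightarrow> real \<Rightarrow> real" where
  "pseries a x = (\<Sum>n. a n * x ^ n)"

definition mfun :: "(nat \<Rightarrow> real) \<Rightarrow> real \<Rightarrow> real \<Rightarrow> real" where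
  "mfun a R x = pseries a (R - x\<^sup>2 / R) / pseries a (x\<^sup>2 / R)"

end

theory Submission
  imports Defs
begin

text \<open>With \<open>t = x\<^sup>2 / R\<close> one has \<open>m(x) = exp (K t)\<close> for \<open>K t = ln f(R - t) - ln f(t)\<close>, and
  \<open>K (R - t) = - K t\<close>. Both inequalities then reduce to strict midpoint concavity of
  \<open>u \<mapsto> K (exp u)\<close> (at \<open>t, s\<close> for the right one, at \<open>R - t, R - s\<close> for the left one). The derivative
  of this function is \<open>-(t L(R - t) + t L(t))\<close> with \<open>L = f'/f\<close>, evaluated at \<open>t = exp u\<close>. It decreases
  strictly because \<open>t L(t)\<close> increases strictly for every series with positive coefficients, while
  \<open>(R - w) L(w)\<close> decreases by the hypothesis on the coefficients. Both monotonicity statements are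
  instances of a Chebyshev-type inequality: if \<open>\<beta>\<^sub>n / \<alpha>\<^sub>n\<close> decreases, so does
  \<open>(\<Sum> \<beta>\<^sub>n x\<^sup>n) / (\<Sum> \<alpha>\<^sub>n x\<^sup>n)\<close>, as one sees by symmetrising the Cauchy product.\<close>

lemma power_cross_le:
  fixes x y :: "'a::linordered_semidom"
  assumes "0 \<le> x" "x \<le> y" "i \<le> j"
  shows "x ^ j * y ^ i \<le> x ^ i * y ^ j"
proof -
  obtain d where j: "j = i + d" using assms(3) le_Suc_ex by blast
  have "x ^ i * y ^ i * x ^ d \<le> x ^ i * y ^ i * y ^ d"
    using assms by (intro mult_left_mono power_mono) auto
  then show ?thesis unfolding j power_add by (simp add: ac_simps)
qed

lemma power2_divide_bounds:
  fixes x R :: real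
  assumes "0 < x" "x < R"
  shows "0 < x\<^sup>2 / R" "x\<^sup>2 / R < R"
  using assms by (auto simp: field_simps power2_eq_square intro: mult_strict_mono)

lemma summable_norm_power_series_inside:
  fixes c :: "nat \<Rightarrow> real"
  assumes "\<And>z. \<bar>z\<bar> < R \<Longrightarrow> summable (\<lambda>n. c n * z ^ n)" and "\<bar>z\<bar> < R"
  shows "summable (\<lambda>n. norm (c n * z ^ n))"
  using powser_insidea[OF assms(1)[of "(\<bar>z\<bar> + R) / 2"]] assms(2) by auto

lemma DERIV_antimono_imp_midpoint_less:
  fixes f f' :: "real \<Rightarrow> real"
  assumes "u < v"
    and deriv: "\<And>z. u \<le> z \<Longrightarrow> z \<le> v \<Longrightarrow> (f has_real_derivative f' z) (at z)"
    and antimono: "\<And>z w. u \<le> z \<Longrightarrow> z < w \<Longrightarrow> w \<le> v \<Longrightarrow> f' w < f' z"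
  shows "f u + f v < 2 * f ((u + v) / 2)"
proof -
  define m where "m = (u + v) / 2"
  have m: "u < m" "m < v" "v - m = m - u" using \<open>u < v\<close> by (auto simp: m_def field_simps)
  obtain z1 where z1: "u < z1" "z1 < m" "f m - f u = (m - u) * f' z1"
    using MVT2[OF \<open>u < m\<close>, of f f'] deriv m by force
  obtain z2 where z2: "m < z2" "z2 < v" "f v - f m = (v - m) * f' z2"
    using MVT2[OF \<open>m < v\<close>, of f f'] deriv m by force
  have "(v - m) * f' z2 < (m - u) * f' z1"
    using antimono[of z1 z2] z1 z2 m by simp
  with z1 z2 show ?thesis unfolding m_def by simp
qed

lemma antitone_ratio_cross_term_nonneg:
  fixes x y :: real
  assumes "0 \<le> x" "x \<le> y" and ratio: "\<And>i j. i \<le> j \<Longrightarrow> \<beta> j * \<alpha> i \<le> \<beta> i * \<alpha> j"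
  shows "0 \<le> (\<beta> i * \<alpha> k - \<beta> k * \<alpha> i) * (x ^ i * y ^ k - x ^ k * y ^ i)"
proof (cases "i \<le> k")
  case True
  then show ?thesis
    using ratio[OF True] power_cross_le[OF assms(1,2) True] by (intro mult_nonneg_nonneg) auto
next
  case False
  then have "k \<le> i" by simp
  then show ?thesis
    using ratio[OF \<open>k \<le> i\<close>] power_cross_le[OF assms(1,2) \<open>k \<le> i\<close>] by (intro mult_nonpos_nonpos) auto
qed

lemma power_series_cross_diff_sums:
  fixes \<alpha> \<beta> :: "nat \<Rightarrow> real"
  assumes "summable (\<lambda>n. norm (\<alpha> n * x ^ n))" "summable (\<lambda>n. norm (\<alpha> n * y ^ n))"
    and "summable (\<lambda>n. norm (\<beta> n * x ^ n))" "summable (\<lambda>n. norm (\<beta> n * y ^ n))"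
  shows "(\<lambda>k. (\<Sum>i\<le>k. (\<beta> i * \<alpha> (k - i) - \<beta> (k - i) * \<alpha> i)
              * (x ^ i * y ^ (k - i) - x ^ (k - i) * y ^ i)) / 2)
    sums ((\<Sum>n. \<beta> n * x ^ n) * (\<Sum>n. \<alpha> n * y ^ n) - (\<Sum>n. \<beta> n * y ^ n) * (\<Sum>n. \<alpha> n * x ^ n))"
proof -
  define T where "T k i = \<beta> i * \<alpha> (k - i) * (x ^ i * y ^ (k - i) - y ^ i * x ^ (k - i))" for k i
  have "(\<lambda>k. \<Sum>i\<le>k. T k i)
      sums ((\<Sum>n. \<beta> n * x ^ n) * (\<Sum>n. \<alpha> n * y ^ n) - (\<Sum>n. \<beta> n * y ^ n) * (\<Sum>n. \<alpha> n * x ^ n))"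
    using sums_diff[OF Cauchy_product_sums[OF assms(3,2)] Cauchy_product_sums[OF assms(4,1)]]
    by (simp add: T_def sum_subtractf[symmetric] algebra_simps)
  moreover have "(\<Sum>i\<le>k. T k i) = (\<Sum>i\<le>k. (\<beta> i * \<alpha> (k - i) - \<beta> (k - i) * \<alpha> i)
              * (x ^ i * y ^ (k - i) - x ^ (k - i) * y ^ i)) / 2" for k
  proof -
    have "(\<Sum>i\<le>k. T k i) = (\<Sum>i\<le>k. T k (k - i))"
      by (rule sum.reindex_bij_witness[where i="\<lambda>i. k - i" and j="\<lambda>i. k - i"]) auto
    then have "2 * (\<Sum>i\<le>k. T k i) = (\<Sum>i\<le>k. T k i + T k (k - i))"
      by (simp add: sum.distrib)
    also have "\<dots> = (\<Sum>i\<le>k. (\<beta> i * \<alpha> (k - i) - \<beta> (k - i) * \<alpha> i)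
              * (x ^ i * y ^ (k - i) - x ^ (k - i) * y ^ i))"
      by (intro sum.cong) (auto simp: T_def algebra_simps)
    finally show ?thesis by simp
  qed
  ultimately show ?thesis by simp
qed

lemma power_series_cross_le:
  fixes \<alpha> \<beta> :: "nat \<Rightarrow> real"
  assumes "0 \<le> x" "x \<le> y" and ratio: "\<And>i j. i \<le> j \<Longrightarrow> \<beta> j * \<alpha> i \<le> \<beta> i * \<alpha> j"
    and "summable (\<lambda>n. norm (\<alpha> n * x ^ n))" "summable (\<lambda>n. norm (\<alpha> n * y ^ n))"
    and "summable (\<lambda>n. norm (\<beta> n * x ^ n))" "summable (\<lambda>n. norm (\<beta> n * y ^ n))"
  shows "(\<Sum>n. \<beta> n * y ^ n) * (\<Sum>n. \<alpha> n * x ^ n) \<le> (\<Sum>n. \<beta> n * x ^ n) * (\<Sum>n. \<alpha> n * y ^ n)"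
proof -
  note diff_sums = power_series_cross_diff_sums[OF assms(4-7)]
  have "0 \<le> (\<Sum>n. \<beta> n * x ^ n) * (\<Sum>n. \<alpha> n * y ^ n) - (\<Sum>n. \<beta> n * y ^ n) * (\<Sum>n. \<alpha> n * x ^ n)"
    unfolding sums_unique[OF diff_sums]
    by (intro suminf_nonneg sums_summable[OF diff_sums] divide_nonneg_pos sum_nonneg
        antitone_ratio_cross_term_nonneg[OF assms(1,2) ratio]) auto
  then show ?thesis by simp
qed

lemma power_series_cross_less:
  fixes \<alpha> \<beta> :: "nat \<Rightarrow> real"
  assumes "0 \<le> x" "x < y" and ratio: "\<And>i j. i \<le> j \<Longrightarrow> \<beta> j * \<alpha> i \<le> \<beta> i * \<alpha> j"
    and strict: "\<beta> 1 * \<alpha> 0 < \<beta> 0 * \<alpha> 1"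
    and "summable (\<lambda>n. norm (\<alpha> n * x ^ n))" "summable (\<lambda>n. norm (\<alpha> n * y ^ n))"
    and "summable (\<lambda>n. norm (\<beta> n * x ^ n))" "summable (\<lambda>n. norm (\<beta> n * y ^ n))"
  shows "(\<Sum>n. \<beta> n * y ^ n) * (\<Sum>n. \<alpha> n * x ^ n) < (\<Sum>n. \<beta> n * x ^ n) * (\<Sum>n. \<alpha> n * y ^ n)"
proof -
  note diff_sums = power_series_cross_diff_sums[OF assms(5-8)]
  have first_term: "(\<Sum>i\<le>1. (\<beta> i * \<alpha> (1 - i) - \<beta> (1 - i) * \<alpha> i)
      * (x ^ i * y ^ (1 - i) - x ^ (1 - i) * y ^ i)) / 2 = (\<beta> 0 * \<alpha> 1 - \<beta> 1 * \<alpha> 0) * (y - x)"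
    by (simp add: atMost_Suc field_simps)
  have "0 < (\<Sum>n. \<beta> n * x ^ n) * (\<Sum>n. \<alpha> n * y ^ n) - (\<Sum>n. \<beta> n * y ^ n) * (\<Sum>n. \<alpha> n * x ^ n)"
    unfolding sums_unique[OF diff_sums]
  proof (rule suminf_pos2[OF sums_summable[OF diff_sums], of 1])
    show "0 \<le> (\<Sum>i\<le>k. (\<beta> i * \<alpha> (k - i) - \<beta> (k - i) * \<alpha> i)
        * (x ^ i * y ^ (k - i) - x ^ (k - i) * y ^ i)) / 2" for k
      using assms(1,2) by (intro divide_nonneg_pos sum_nonneg
          antitone_ratio_cross_term_nonneg[OF _ _ ratio]) auto
  qed (use first_term strict \<open>x < y\<close> in simp)
  then show ?thesis by simp
qed

locale pos_coeff_power_series =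
  fixes a :: "nat \<Rightarrow> real" and R :: real
  assumes R_pos: "0 < R"
    and coeff_pos: "\<And>n. 0 < a n"
    and summable_inside: "\<And>z. \<bar>z\<bar> < R \<Longrightarrow> summable (\<lambda>n. a n * z ^ n)"
begin

definition log_deriv :: "real \<Rightarrow> real" where
  "log_deriv z = pseries (diffs a) z / pseries a z"

definition log_ratio :: "real \<Rightarrow> real" where
  "log_ratio t = ln (pseries a (R - t)) - ln (pseries a t)"

lemma pseries_pos: "0 < z \<Longrightarrow> z < R \<Longrightarrow> 0 < pseries a z"
  unfolding pseries_def using summable_inside[of z] coeff_pos by (intro suminf_pos) auto

lemma pseries_has_derivative:
  "\<bar>z\<bar> < R \<Longrightarrow> (pseries a has_real_derivative pseries (diffs a) z) (at z)"
  using termdiffs_strong'[of R a z] summable_inside by (simp add: pseries_def[abs_def])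

lemma sums_pseries_diffs: "\<bar>z\<bar> < R \<Longrightarrow> (\<lambda>n. diffs a n * z ^ n) sums pseries (diffs a) z"
  unfolding pseries_def using termdiff_converges[of z R a] summable_inside
  by (simp add: summable_sums)

lemma sums_index_mult_pseries:
  assumes "\<bar>z\<bar> < R"
  shows "(\<lambda>n. real n * a n * z ^ n) sums (z * pseries (diffs a) z)"
proof -
  have "(\<lambda>n. z * (diffs a n * z ^ n)) sums (z * pseries (diffs a) z)"
    using sums_pseries_diffs[OF assms] by (rule sums_mult)
  moreover have "(\<lambda>n. z * (diffs a n * z ^ n)) = (\<lambda>n. real (Suc n) * a (Suc n) * z ^ Suc n)"
    by (auto simp: diffs_def fun_eq_iff)
  ultimately show ?thesis using sums_Suc_iff[of "\<lambda>n. real n * a n * z ^ n"] by simp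
qed

lemma mult_log_deriv_strict_mono:
  assumes "0 < x" "x < y" "y < R"
  shows "x * log_deriv x < y * log_deriv y"
proof -
  have inside: "\<bar>x\<bar> < R" "\<bar>y\<bar> < R" using assms by auto
  have summable_index: "\<bar>z\<bar> < R \<Longrightarrow> summable (\<lambda>n. real n * a n * z ^ n)" for z
    using sums_index_mult_pseries by (rule sums_summable)
  have "(\<Sum>n. a n * y ^ n) * (\<Sum>n. real n * a n * x ^ n)
      < (\<Sum>n. a n * x ^ n) * (\<Sum>n. real n * a n * y ^ n)"
    using assms coeff_pos[of 0] coeff_pos[of 1] coeff_pos
    by (intro power_series_cross_less summable_norm_power_series_inside[OF summable_inside]
        summable_norm_power_series_inside[OF summable_index] inside)
      (auto simp: mult_right_mono)
  then have "pseries a y * (x * pseries (diffs a) x) < pseries a x * (y * pseries (diffs a) y)"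
    using sums_unique[OF sums_index_mult_pseries[OF inside(1)]]
      sums_unique[OF sums_index_mult_pseries[OF inside(2)]] by (simp add: pseries_def)
  then show ?thesis
    using pseries_pos[of x] pseries_pos[of y] assms by (simp add: log_deriv_def field_simps)
qed

lemma log_ratio_exp_has_derivative:
  assumes "u < ln R"
  shows "((\<lambda>u. log_ratio (exp u)) has_real_derivative
      - exp u * (log_deriv (R - exp u) + log_deriv (exp u))) (at u)"
proof -
  have exp_bounds: "0 < exp u" "exp u < R" using exp_less_mono[OF assms] R_pos by simp_all
  have "((\<lambda>u. ln (pseries a (R - exp u)) - ln (pseries a (exp u))) has_real_derivative
      pseries (diffs a) (R - exp u) * (- exp u) / pseries a (R - exp u)
      - pseries (diffs a) (exp u) * exp u / pseries a (exp u)) (at u)"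
    using exp_bounds pseries_pos[of "exp u"] pseries_pos[of "R - exp u"]
    by (auto intro!: derivative_eq_intros DERIV_chain2[OF pseries_has_derivative])
  then show ?thesis
    unfolding log_ratio_def log_deriv_def by (rule DERIV_cong) (simp add: field_simps)
qed

lemma log_ratio_reflect: "log_ratio (R - t) = - log_ratio t"
  by (simp add: log_ratio_def)

lemma mfun_eq_exp_log_ratio:
  assumes "0 < x" "x < R"
  shows "mfun a R x = exp (log_ratio (x\<^sup>2 / R))"
  using power2_divide_bounds[OF assms] pseries_pos[of "x\<^sup>2 / R"] pseries_pos[of "R - x\<^sup>2 / R"]
  by (simp add: mfun_def log_ratio_def exp_diff)

lemma sqrt_mfun_mult:
  assumes "0 < x" "x < R" "0 < y" "y < R"
  shows "sqrt (mfun a R x * mfun a R y) = exp ((log_ratio (x\<^sup>2 / R) + log_ratio (y\<^sup>2 / R)) / 2)"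
proof -
  have "mfun a R x * mfun a R y = (exp ((log_ratio (x\<^sup>2 / R) + log_ratio (y\<^sup>2 / R)) / 2))\<^sup>2"
    using assms by (simp add: mfun_eq_exp_log_ratio power2_eq_square exp_add[symmetric])
  then show ?thesis by simp
qed

lemma mfun_sqrt_mult:
  assumes "0 < x" "x < R" "0 < y" "y < R"
  shows "mfun a R (sqrt (x * y)) = exp (log_ratio (sqrt (x\<^sup>2 / R * (y\<^sup>2 / R))))"
proof -
  have "sqrt (x * y) < sqrt (R * R)"
    using assms by (intro real_sqrt_less_mono mult_strict_mono) auto
  then have "mfun a R (sqrt (x * y)) = exp (log_ratio (x * y / R))"
    using assms R_pos by (simp add: mfun_eq_exp_log_ratio)
  also have "x * y / R = sqrt (x\<^sup>2 / R * (y\<^sup>2 / R))"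
    using assms R_pos by (simp add: real_sqrt_mult real_sqrt_divide)
  finally show ?thesis .
qed

lemma inverse_mfun_root4:
  assumes "0 < x" "x < R" "0 < y" "y < R"
  shows "1 / mfun a R (root 4 ((R\<^sup>2 - x\<^sup>2) * (R\<^sup>2 - y\<^sup>2)))
    = exp (- log_ratio (sqrt ((R - x\<^sup>2 / R) * (R - y\<^sup>2 / R))))"
proof -
  define P where "P = (R\<^sup>2 - x\<^sup>2) * (R\<^sup>2 - y\<^sup>2)"
  have "x\<^sup>2 < R\<^sup>2" "y\<^sup>2 < R\<^sup>2" using assms by (auto intro: power_strict_mono)
  then have "0 < P" "P < R\<^sup>2 * R\<^sup>2"
    unfolding P_def using assms by (simp, intro mult_strict_mono) auto
  then have P: "0 < P" "P < R ^ 4" by (simp_all flip: power_add)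
  have root4_sq: "(root 4 P)\<^sup>2 = sqrt P"
    using real_root_mult_exp[of 2 2 P] P by (simp add: sqrt_def)
  have "0 < root 4 P" "root 4 P < R"
    using P R_pos real_root_less_mono[of 4 P "R ^ 4"] by (auto simp: real_root_pos2)
  then have "mfun a R (root 4 P) = exp (log_ratio (sqrt P / R))"
    by (simp add: mfun_eq_exp_log_ratio root4_sq)
  also have "sqrt P / R = sqrt ((R - x\<^sup>2 / R) * (R - y\<^sup>2 / R))"
  proof -
    have "P = R\<^sup>2 * ((R - x\<^sup>2 / R) * (R - y\<^sup>2 / R))"
      unfolding P_def using R_pos by (simp add: field_simps power2_eq_square)
    then show ?thesis using R_pos by (simp add: real_sqrt_mult)
  qed
  finally show ?thesis unfolding P_def by (simp add: exp_minus divide_inverse)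
qed

end

locale decreasing_ratio_power_series = pos_coeff_power_series +
  assumes ratio_decseq: "decseq (\<lambda>n. R * real (n + 1) * a (n + 1) / a n - real n)"
begin

lemma diff_mult_log_deriv_antimono:
  assumes "0 < x" "x < y" "y < R"
  shows "(R - y) * log_deriv y \<le> (R - x) * log_deriv x"
proof -
  have inside: "\<bar>x\<bar> < R" "\<bar>y\<bar> < R" using assms by auto
  \<comment> \<open>\<open>(R - z) f'(z) = \<Sum> \<beta>\<^sub>n z\<^sup>n\<close>, and \<open>\<beta>\<^sub>n / a\<^sub>n\<close> is exactly the sequence assumed decreasing.\<close>
  define \<beta> where "\<beta> n = R * diffs a n - real n * a n" for n
  have \<beta>_sums: "(\<lambda>n. \<beta> n * z ^ n) sums ((R - z) * pseries (diffs a) z)" if "\<bar>z\<bar> < R" for z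
    using sums_diff[OF sums_mult[OF sums_pseries_diffs[OF that], of R] sums_index_mult_pseries[OF that]]
    by (simp add: \<beta>_def algebra_simps)
  have ratio: "\<beta> j * a i \<le> \<beta> i * a j" if "i \<le> j" for i j
  proof -
    have "\<beta> n / a n = R * real (n + 1) * a (n + 1) / a n - real n" for n
      using coeff_pos[of n] by (simp add: \<beta>_def diffs_def field_simps)
    then have "\<beta> j / a j \<le> \<beta> i / a i"
      using ratio_decseq that unfolding decseq_def by metis
    then show ?thesis using coeff_pos[of i] coeff_pos[of j] by (simp add: field_simps)
  qed
  have "(\<Sum>n. \<beta> n * y ^ n) * (\<Sum>n. a n * x ^ n) \<le> (\<Sum>n. \<beta> n * x ^ n) * (\<Sum>n. a n * y ^ n)"
    using assms ratio
    by (intro power_series_cross_le summable_norm_power_series_inside[OF summable_inside]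
        summable_norm_power_series_inside[OF sums_summable[OF \<beta>_sums]] inside) auto
  then have "(R - y) * pseries (diffs a) y * pseries a x \<le> (R - x) * pseries (diffs a) x * pseries a y"
    using sums_unique[OF \<beta>_sums[OF inside(1)]] sums_unique[OF \<beta>_sums[OF inside(2)]]
    by (simp add: pseries_def mult_ac)
  then show ?thesis
    using pseries_pos[of x] pseries_pos[of y] assms by (simp add: log_deriv_def field_simps)
qed

lemma log_ratio_geometric_midpoint_less:
  assumes "0 < t" "t < s" "s < R"
  shows "log_ratio t + log_ratio s < 2 * log_ratio (sqrt (t * s))"
proof -
  define g' where "g' u = - exp u * (log_deriv (R - exp u) + log_deriv (exp u))" for u
  have "log_ratio (exp (ln t)) + log_ratio (exp (ln s)) < 2 * log_ratio (exp ((ln t + ln s) / 2))"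
  proof (rule DERIV_antimono_imp_midpoint_less[where f' = g'])
    show "ln t < ln s" using assms by simp
    show "((\<lambda>u. log_ratio (exp u)) has_real_derivative g' u) (at u)" if "u \<le> ln s" for u
      unfolding g'_def using that ln_strict_mono[of s R] assms
      by (intro log_ratio_exp_has_derivative) linarith
    show "g' w < g' u" if "ln t \<le> u" "u < w" "w \<le> ln s" for u w
    proof -
      have "exp u < exp w" "exp w < R"
        using that assms ln_ge_iff[of s w] by auto
      then have "exp u * log_deriv (R - exp u) \<le> exp w * log_deriv (R - exp w)"
        "exp u * log_deriv (exp u) < exp w * log_deriv (exp w)"
        using diff_mult_log_deriv_antimono[of "R - exp w" "R - exp u"]
          mult_log_deriv_strict_mono[of "exp u" "exp w"] by auto
      then show ?thesis unfolding g'_def by (simp add: algebra_simps)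
    qed
  qed
  moreover have "(ln t + ln s) / 2 = ln (sqrt (t * s))"
    using assms by (simp add: ln_sqrt ln_mult)
  ultimately show ?thesis using assms by simp
qed

lemma log_ratio_geometric_midpoint:
  assumes "0 < t" "t < R" "0 < s" "s < R"
  shows "log_ratio t + log_ratio s \<le> 2 * log_ratio (sqrt (t * s))"
    and "log_ratio t + log_ratio s = 2 * log_ratio (sqrt (t * s)) \<longleftrightarrow> t = s"
proof -
  have "log_ratio t + log_ratio s < 2 * log_ratio (sqrt (t * s))" if "t \<noteq> s"
  proof (cases "t < s")
    case True
    then show ?thesis using assms by (intro log_ratio_geometric_midpoint_less)
  next
    case False
    then show ?thesis
      using that assms log_ratio_geometric_midpoint_less[of s t] by (simp add: mult.commute)
  qed
  then show "log_ratio t + log_ratio s \<le> 2 * log_ratio (sqrt (t * s))"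
    and "log_ratio t + log_ratio s = 2 * log_ratio (sqrt (t * s)) \<longleftrightarrow> t = s"
    using assms by (cases "t = s"; force)+
qed

end

theorem theorem1p5:
  fixes a :: "nat \<Rightarrow> real" and R :: real
  assumes R_pos: "0 < R"
    and a_pos: "\<And>n. a n > 0"
    and conv: "\<And>x. \<bar>x\<bar> < R \<Longrightarrow> summable (\<lambda>n. a n * x ^ n)"
    and dec: "decseq (\<lambda>n. R * real (n + 1) * a (n + 1) / a n - real n)"
  shows "\<forall>x y. 0 < x \<and> x < R \<and> 0 < y \<and> y < R \<longrightarrow>
      1 / mfun a R (root 4 ((R\<^sup>2 - x\<^sup>2) * (R\<^sup>2 - y\<^sup>2))) \<le> sqrt (mfun a R x * mfun a R y)
    \<and> sqrt (mfun a R x * mfun a R y) \<le> mfun a R (sqrt (x * y))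
    \<and> (1 / mfun a R (root 4 ((R\<^sup>2 - x\<^sup>2) * (R\<^sup>2 - y\<^sup>2))) = sqrt (mfun a R x * mfun a R y) \<longleftrightarrow> x = y)
    \<and> (sqrt (mfun a R x * mfun a R y) = mfun a R (sqrt (x * y)) \<longleftrightarrow> x = y)"
proof (intro allI impI, goal_cases)
  case (1 x y)
  interpret decreasing_ratio_power_series a R
    using assms by unfold_locales auto
  from 1 have xy: "0 < x" "x < R" "0 < y" "y < R" by simp_all
  define t s where "t = x\<^sup>2 / R" and "s = y\<^sup>2 / R"
  have ts: "0 < t" "t < R" "0 < s" "s < R"
    unfolding t_def s_def using power2_divide_bounds xy by auto
  have "t = s \<longleftrightarrow> x = y"
    using xy R_pos by (auto simp: t_def s_def power2_eq_iff_nonneg)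
  moreover note log_ratio_geometric_midpoint[OF ts]
  moreover note log_ratio_geometric_midpoint[of "R - t" "R - s"]
  ultimately show ?case
    unfolding inverse_mfun_root4[OF xy] sqrt_mfun_mult[OF xy] mfun_sqrt_mult[OF xy]
      t_def[symmetric] s_def[symmetric]
    using ts by (auto simp: log_ratio_reflect)
qed

end
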